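(* Let $t>1$, $\eta>1$, $m\ge1$, $d>0$ and $w\in(0,1)$, and suppose $$d\le\frac{\eta\log(1/w)}{t}+\frac{2\eta\log(m+\log_\eta t)}{t}.$$ Then $$t\le\frac{2\eta}{d}\log\Big(2m+2+2\log_\eta\frac{2}{\log\eta}+2[\log_\eta(1/d)]_+\Big)+\frac{2\eta}{d}\log(1/w),$$ where $[x]_+=\max\{x,0\}$. *)

theory Defs
  imports Complex_Main
begin

end

theory Submission
  imports Defs
begin

text \<open>Write \<open>s = d t / (2 \<eta>)\<close>, \<open>a = ln (1/w)\<close> and let \<open>Y\<close> be the argument of the logarithm in
the claim. The hypothesis says \<open>s - a/2 \<le> ln (m + log\<^sub>\<eta> t)\<close>. Since \<open>t = (2 \<eta> / d) s\<close> and
\<open>log\<^sub>\<eta> x \<le> x / ln \<eta>\<close>, one gets \<open>m + log\<^sub>\<eta> t \<le> Y/2 + s\<close>, so \<open>exp (s - a/2) \<le> Y/2 + s\<close>.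
Exponential growth beats this affine bound as soon as \<open>s > ln Y + a\<close>, whence \<open>s \<le> ln Y + a\<close>,
which is the claim.\<close>

lemma ln_le_half_self:
  fixes x :: real
  assumes "x > 0"
  shows "ln x \<le> x / 2"
proof -
  have "ln x = 2 * ln (sqrt x)"
    using assms by (simp add: ln_sqrt)
  also have "\<dots> \<le> 2 * (sqrt x - 1)"
    using ln_le_minus_one[of "sqrt x"] assms by simp
  also have "\<dots> \<le> x / 2"
    using assms zero_le_power2[of "sqrt x - 2"] by (simp add: power2_eq_square algebra_simps)
  finally show ?thesis .
qed

lemma exp_le_affine_imp_le_ln:
  fixes u b Y :: real
  assumes "Y \<ge> 2" and "b \<ge> 0" and "exp u \<le> Y / 2 + u + b"
  shows "u \<le> ln Y + b"
proof (rule ccontr)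
  assume "\<not> u \<le> ln Y + b"
  then have gap: "u - ln Y > b" by simp
  have "Y * (1 + (u - ln Y)) \<le> Y * exp (u - ln Y)"
    using assms(1) by (intro mult_left_mono) auto
  also have "\<dots> = exp u"
    using assms(1) by (simp add: exp_diff)
  finally have "Y + Y * (u - ln Y) \<le> exp u"
    by (simp add: algebra_simps)
  moreover have "2 * (u - ln Y) \<le> Y * (u - ln Y)"
    using assms(1,2) gap by (intro mult_right_mono) auto
  moreover have "ln Y \<le> Y / 2"
    using assms(1) by (intro ln_le_half_self) simp
  ultimately show False
    using assms(3) gap by argo
qed

lemma log_two_div_ln_ge_minus_one:
  fixes b :: real
  assumes "b > 1"
  shows "log b (2 / ln b) \<ge> -1"
proof -
  have L: "ln b > 0"
    using assms by simp
  have "ln (ln b / 2) \<le> ln b / 2 - 1"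
    using L by (intro ln_le_minus_one) simp
  then have "- ln b \<le> ln (2 / ln b)"
    using L by (simp add: ln_div)
  then show ?thesis
    using L by (simp add: log_def field_simps)
qed

lemma log_le_log_plus_linear:
  fixes b c t :: real
  assumes "b > 1" and "c > 0" and "t > 0"
  shows "log b t \<le> log b (1 / (c * ln b)) + c * t"
proof -
  have L: "ln b > 0"
    using assms(1) by simp
  have "log b t = log b (1 / (c * ln b) * (c * ln b * t))"
    using assms(2) L by simp
  also have "\<dots> = log b (1 / (c * ln b)) + log b (c * ln b * t)"
    using assms L by (intro log_mult_pos) auto
  also have "log b (c * ln b * t) \<le> c * t"
  proof -
    have "ln (c * ln b * t) \<le> c * ln b * t - 1"
      using assms L by (intro ln_le_minus_one) simp
    then show ?thesis
      using L by (simp add: log_def field_simps)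
  qed
  finally show ?thesis
    by simp
qed

lemma log_le_log_two_div_ln_plus_linear:
  fixes b d t :: real
  assumes "b > 1" and "d > 0" and "t > 0"
  shows "log b t \<le> log b (2 / ln b) + log b (1 / d) + 1 + d * t / (2 * b)"
proof -
  have "log b t \<le> log b (1 / (d / (2 * b) * ln b)) + d * t / (2 * b)"
    using log_le_log_plus_linear[of b "d / (2 * b)" t] assms by simp
  also have "1 / (d / (2 * b) * ln b) = 2 / ln b * (1 / d) * b"
    by (simp add: field_simps)
  also have "log b \<dots> = log b (2 / ln b) + log b (1 / d) + 1"
    using assms(1,2) by (simp add: log_mult_pos[of "2 / ln b * (1 / d)" b, simplified]
        log_mult_pos[of "2 / ln b" "1 / d", simplified])
  finally show ?thesis .
qed

theorem lemma2:
  fixes t \<eta> m d w :: real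
  assumes "t > 1" and "\<eta> > 1" and "m \<ge> 1" and "d > 0" and "0 < w" and "w < 1"
    and "d \<le> \<eta> * ln (1 / w) / t + 2 * \<eta> * ln (m + log \<eta> t) / t"
  shows "t \<le> 2 * \<eta> / d * ln (2 * m + 2 + 2 * log \<eta> (2 / ln \<eta>)
                 + 2 * max (log \<eta> (1 / d)) 0) + 2 * \<eta> / d * ln (1 / w)"
proof -
  define s where "s = d * t / (2 * \<eta>)"
  define a where "a = ln (1 / w)"
  define X where "X = m + log \<eta> t"
  define Y where "Y = 2 * m + 2 + 2 * log \<eta> (2 / ln \<eta>) + 2 * max (log \<eta> (1 / d)) 0"
  have lg: "log \<eta> (2 / ln \<eta>) \<ge> -1"
    using assms(2) by (rule log_two_div_ln_ge_minus_one)
  have "log \<eta> t > 0"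
    using assms(1,2) by simp
  then have "X > 0"
    using assms(3) by (simp add: X_def)
  have "s - a / 2 \<le> ln X"
    using assms(1,2,7) by (simp add: s_def a_def X_def field_simps)
  then have "exp (s - a / 2) \<le> X"
    using \<open>X > 0\<close> by (metis exp_le_cancel_iff exp_ln)
  also have "X \<le> Y / 2 + s"
    using log_le_log_two_div_ln_plus_linear[OF assms(2,4), of t] assms(1)
      max.cobounded1[of "log \<eta> (1 / d)" 0]
    unfolding X_def Y_def s_def by argo
  finally have "exp (s - a / 2) \<le> Y / 2 + (s - a / 2) + a / 2"
    by simp
  then have "s - a / 2 \<le> ln Y + a / 2"
    using assms(3,5,6) lg by (intro exp_le_affine_imp_le_ln) (auto simp: Y_def a_def)
  then show ?thesis
    using assms(2,4) by (simp add: s_def a_def Y_def field_simps)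
qed

end
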